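(* Let $\mathfrak p\in\mathcal F^*$ and let $N$ be an $R$-module with $\mathfrak pN=0$. Then: (a) $N$ is simple-$\mathcal F$-torsion-free if and only if $N$ is simple-torsion-free as an $R/\mathfrak p$-module; (b) $N$ is simple-$\mathcal F$-divisible if and only if $N$ is simple-divisible as an $R/\mathfrak p$-module.
   Context: Throughout, $R$ is a commutative Noetherian local ring and $\mathcal F$ is a Gabriel topology on $R$: a nonempty set of ideals of $R$ such that (1) if $\mathfrak a\in\mathcal F$ and $\mathfrak a\subseteq\mathfrak b$ then $\mathfrak b\in\mathcal F$; (2) if $\mathfrak a,\mathfrak b\in\mathcal F$ then $\mathfrak a\cap\mathfrak b\in\mathcal F$; (3) if $\mathfrak b$ is an ideal and there is $\mathfrak a\in\mathcal F$ with $(\mathfrak b:r)\in\mathcal F$ for all $r\in\mathfrak a$, then $\mathfrak b\in\mathcal F$. For an $R$-module $X$ and ideal $\mathfrak a$, $X[\mathfrak a]=\{x\in X:\mathfrak a x=0\}$. $X$ is $\mathcal F$-torsion-free if $X[\mathfrak a]=0$ for all $\mathfrak a\in\mathcal F$, and $\mathcal F$-divisible if $\mathfrak aX=X$ for all $\mathfrak a\in\mathcal F$. $M$ is simple-$\mathcal F$-torsion-free if $M\neq0$, $M$ is $\mathcal F$-torsion-free, and for every submodule $0\neq U\subsetneq M$, $M/U$ is not $\mathcal F$-torsion-free; $N$ is simple-$\mathcal F$-divisible if $N\ne0$, $N$ is $\mathcal F$-divisible, and no submodule $0\neq V\subsetneq N$ is $\mathcal F$-divisible. $\mathcal F^*$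 denotes the set of maximal elements of $\mathrm{Spec}(R)\setminus\mathcal F$. Over a domain $D$: a module is torsion-free if no nonzero element of $D$ kills a nonzero element, divisible if $dX=X$ for all $0\neq d\in D$; simple-torsion-free means nonzero, torsion-free, and every quotient $M/U$ with $0\ne U\subsetneq M$ is not torsion-free; simple-divisible means nonzero, divisible, and no submodule $0\ne V\subsetneq N$ is divisible. *)

theory Defs
  imports "HOL-Algebra.Algebra"
begin

definition local_ring :: "('a, 'c) ring_scheme \<Rightarrow> bool" where
  "local_ring R \<longleftrightarrow> cring R \<and> (\<exists>!m. maximalideal m R)"

definition colon_ideal :: "('a, 'c) ring_scheme \<Rightarrow> 'a set \<Rightarrow> 'a \<Rightarrow> 'a set" where
  "colon_ideal R b r = {s \<in> carrier R. s \<otimes>\<^bsub>R\<^esub> r \<in> b}"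

definition gabriel_topology :: "('a, 'c) ring_scheme \<Rightarrow> 'a set set \<Rightarrow> bool" where
  "gabriel_topology R F \<longleftrightarrow>
     F \<noteq> {} \<and> (\<forall>a\<in>F. ideal a R) \<and>
     (\<forall>a b. a \<in> F \<and> ideal b R \<and> a \<subseteq> b \<longrightarrow> b \<in> F) \<and>
     (\<forall>a\<in>F. \<forall>b\<in>F. a \<inter> b \<in> F) \<and>
     (\<forall>b. ideal b R \<and> (\<exists>a\<in>F. \<forall>r\<in>a. colon_ideal R b r \<in> F) \<longrightarrow> b \<in> F)"

definition F_star :: "('a, 'c) ring_scheme \<Rightarrow> 'a set set \<Rightarrow> 'a set set" where
  "F_star R F = {p. primeideal p R \<and> p \<notin> F \<and>
      (\<forall>q. primeideal q R \<and> q \<notin> F \<and> p \<subseteq> q \<longrightarrow> q = p)}"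

text \<open>a W: the set of finite sums of elements r x with r in a and x in W,
  i.e. the least set containing 0 and all such r x and closed under addition.\<close>
definition ideal_times :: "('s, 'b) module \<Rightarrow> 's set \<Rightarrow> 'b set \<Rightarrow> 'b set" where
  "ideal_times M a W = Inter {Y. \<zero>\<^bsub>M\<^esub> \<in> Y \<and>
      (\<forall>r\<in>a. \<forall>x\<in>W. r \<odot>\<^bsub>M\<^esub> x \<in> Y) \<and>
      (\<forall>y\<in>Y. \<forall>z\<in>Y. y \<oplus>\<^bsub>M\<^esub> z \<in> Y)}"

definition ann_part :: "('s, 'b) module \<Rightarrow> 's set \<Rightarrow> 'b set \<Rightarrow> 'b set" where
  "ann_part M a W = {x \<in> W. \<forall>r\<in>a. r \<odot>\<^bsub>M\<^esub> x = \<zero>\<^bsub>M\<^esub>}"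

definition F_torsion_free :: "'s set set \<Rightarrow> ('s, 'b) module \<Rightarrow> bool" where
  "F_torsion_free F M \<longleftrightarrow> (\<forall>a\<in>F. ann_part M a (carrier M) = {\<zero>\<^bsub>M\<^esub>})"

text \<open>The quotient M/U is F-torsion-free: (M/U)[a] = 0 for all a in F, i.e.
  whenever a x is contained in U then x lies in U.\<close>
definition quot_F_torsion_free :: "'s set set \<Rightarrow> ('s, 'b) module \<Rightarrow> 'b set \<Rightarrow> bool" where
  "quot_F_torsion_free F M U \<longleftrightarrow>
     (\<forall>a\<in>F. \<forall>x\<in>carrier M. (\<forall>r\<in>a. r \<odot>\<^bsub>M\<^esub> x \<in> U) \<longrightarrow> x \<in> U)"

definition simple_F_torsion_free ::
    "('s, 'c) ring_scheme \<Rightarrow> 's set set \<Rightarrow> ('s, 'b) module \<Rightarrow> bool" where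
  "simple_F_torsion_free R F M \<longleftrightarrow>
     carrier M \<noteq> {\<zero>\<^bsub>M\<^esub>} \<and> F_torsion_free F M \<and>
     (\<forall>U. submodule U R M \<and> U \<noteq> {\<zero>\<^bsub>M\<^esub>} \<and> U \<subset> carrier M \<longrightarrow>
          \<not> quot_F_torsion_free F M U)"

definition F_divisible :: "'s set set \<Rightarrow> ('s, 'b) module \<Rightarrow> 'b set \<Rightarrow> bool" where
  "F_divisible F M W \<longleftrightarrow> (\<forall>a\<in>F. ideal_times M a W = W)"

definition simple_F_divisible ::
    "('s, 'c) ring_scheme \<Rightarrow> 's set set \<Rightarrow> ('s, 'b) module \<Rightarrow> bool" where
  "simple_F_divisible R F M \<longleftrightarrow>
     carrier M \<noteq> {\<zero>\<^bsub>M\<^esub>} \<and> F_divisible F M (carrier M) \<and>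
     (\<forall>V. submodule V R M \<and> V \<noteq> {\<zero>\<^bsub>M\<^esub>} \<and> V \<subset> carrier M \<longrightarrow>
          \<not> F_divisible F M V)"

definition torsion_free :: "('s, 'c) ring_scheme \<Rightarrow> ('s, 'b) module \<Rightarrow> bool" where
  "torsion_free D M \<longleftrightarrow>
     (\<forall>d\<in>carrier D - {\<zero>\<^bsub>D\<^esub>}. \<forall>x\<in>carrier M.
        d \<odot>\<^bsub>M\<^esub> x = \<zero>\<^bsub>M\<^esub> \<longrightarrow> x = \<zero>\<^bsub>M\<^esub>)"

text \<open>The quotient M/U is torsion-free.\<close>
definition quot_torsion_free :: "('s, 'c) ring_scheme \<Rightarrow> ('s, 'b) module \<Rightarrow> 'b set \<Rightarrow> bool" where
  "quot_torsion_free D M U \<longleftrightarrow>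
     (\<forall>d\<in>carrier D - {\<zero>\<^bsub>D\<^esub>}. \<forall>x\<in>carrier M. d \<odot>\<^bsub>M\<^esub> x \<in> U \<longrightarrow> x \<in> U)"

definition simple_torsion_free :: "('s, 'c) ring_scheme \<Rightarrow> ('s, 'b) module \<Rightarrow> bool" where
  "simple_torsion_free D M \<longleftrightarrow>
     carrier M \<noteq> {\<zero>\<^bsub>M\<^esub>} \<and> torsion_free D M \<and>
     (\<forall>U. submodule U D M \<and> U \<noteq> {\<zero>\<^bsub>M\<^esub>} \<and> U \<subset> carrier M \<longrightarrow>
          \<not> quot_torsion_free D M U)"

definition divisible :: "('s, 'c) ring_scheme \<Rightarrow> ('s, 'b) module \<Rightarrow> 'b set \<Rightarrow> bool" where
  "divisible D M W \<longleftrightarrow> (\<forall>d\<in>carrier D - {\<zero>\<^bsub>D\<^esub>}. (\<lambda>x. d \<odot>\<^bsub>M\<^esub> x) ` W = W)"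

definition simple_divisible :: "('s, 'c) ring_scheme \<Rightarrow> ('s, 'b) module \<Rightarrow> bool" where
  "simple_divisible D M \<longleftrightarrow>
     carrier M \<noteq> {\<zero>\<^bsub>M\<^esub>} \<and> divisible D M (carrier M) \<and>
     (\<forall>V. submodule V D M \<and> V \<noteq> {\<zero>\<^bsub>M\<^esub>} \<and> V \<subset> carrier M \<longrightarrow>
          \<not> divisible D M V)"

text \<open>Same underlying abelian group; the coset W = p + r acts as r does
  (well defined when p N = 0).\<close>
definition quot_module :: "('a, 'b) module \<Rightarrow> ('a set, 'b) module" where
  "quot_module N =
     \<lparr>carrier = carrier N, monoid.mult = monoid.mult N, one = one N, ring.zero = ring.zero N, ring.add = ring.add N,
      smult = (\<lambda>W x. SOME y. \<exists>r\<in>W. y = r \<odot>\<^bsub>N\<^esub> x)\<rparr>"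

end

theory Submission
  imports Defs
begin

text \<open>For \<open>p \<in> F*\<close>, no ideal of \<open>F\<close> is contained in \<open>p\<close> (else \<open>p \<in> F\<close>), while
  \<open>p + Rd \<in> F\<close> for every \<open>d \<notin> p\<close>: in a Noetherian ring an ideal outside \<open>F\<close> lies in an
  ideal maximal outside \<open>F\<close>, the closure axiom of the Gabriel topology makes such an ideal
  prime, and the only prime outside \<open>F\<close> containing \<open>p\<close> is \<open>p\<close>. Hence on a module killed
  by \<open>p\<close> the condition \<open>a x \<subseteq> U\<close> for some \<open>a \<in> F\<close> becomes \<open>d x \<in> U\<close> for some \<open>d \<notin> p\<close>, and
  \<open>a V = V\<close> for all \<open>a \<in> F\<close> becomes \<open>d V = V\<close> for all \<open>d \<notin> p\<close>. These are the torsion and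
  divisibility conditions over \<open>R/p\<close>, whose nonzero elements are the cosets \<open>p + d\<close>, \<open>d \<notin> p\<close>,
  acting as \<open>d\<close>.\<close>

section \<open>Gabriel topologies on Noetherian rings\<close>

lemma gabriel_topology_ideal:
  "gabriel_topology R F \<Longrightarrow> a \<in> F \<Longrightarrow> ideal a R"
  unfolding gabriel_topology_def by blast

lemma gabriel_topology_subset_carrier:
  "gabriel_topology R F \<Longrightarrow> a \<in> F \<Longrightarrow> a \<subseteq> carrier R"
  by (meson gabriel_topology_ideal ideal.Icarr subsetI)

lemma gabriel_topology_upward_closed:
  "gabriel_topology R F \<Longrightarrow> a \<in> F \<Longrightarrow> ideal b R \<Longrightarrow> a \<subseteq> b \<Longrightarrow> b \<in> F"
  unfolding gabriel_topology_def by blast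

lemma gabriel_topology_colon_closed:
  assumes "gabriel_topology R F" and "a \<in> F" and "ideal b R"
    and "\<And>r. r \<in> a \<Longrightarrow> colon_ideal R b r \<in> F"
  shows "b \<in> F"
proof -
  have "\<forall>b. ideal b R \<and> (\<exists>a\<in>F. \<forall>r\<in>a. colon_ideal R b r \<in> F) \<longrightarrow> b \<in> F"
    using assms(1) unfolding gabriel_topology_def by (elim conjE)
  with assms(2-4) show ?thesis by blast
qed

lemma (in ring) gabriel_topology_carrier:
  assumes "gabriel_topology R F"
  shows "carrier R \<in> F"
proof -
  from assms obtain a where a: "a \<in> F"
    unfolding gabriel_topology_def by blast
  show ?thesis
    by (rule gabriel_topology_upward_closed[OF assms a oneideal gabriel_topology_subset_carrier[OF assms a]])
qed

lemma (in cring) ideal_colon_ideal: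
  assumes m: "ideal m R" and x: "x \<in> carrier R"
  shows "ideal (colon_ideal R m x) R"
proof (rule idealI)
  interpret m: ideal m R by fact
  show "ring R" ..
  show "subgroup (colon_ideal R m x) (add_monoid R)"
  proof (rule add.subgroupI)
    show "colon_ideal R m x \<subseteq> carrier R" "colon_ideal R m x \<noteq> {}"
      using x by (auto simp: colon_ideal_def intro!: exI[of _ \<zero>])
  next
    fix a b assume "a \<in> colon_ideal R m x" "b \<in> colon_ideal R m x"
    then show "\<ominus> a \<in> colon_ideal R m x" "a \<oplus> b \<in> colon_ideal R m x"
      using x by (auto simp: colon_ideal_def l_minus l_distr)
  qed
  fix a y assume "a \<in> colon_ideal R m x" "y \<in> carrier R"
  then show "y \<otimes> a \<in> colon_ideal R m x" "a \<otimes> y \<in> colon_ideal R m x"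
    using x by (auto simp: colon_ideal_def m_assoc m.I_l_closed)
      (metis m.I_r_closed m_assoc m_comm m_closed)
qed

lemma (in cring) mem_set_add_cgenideal_iff:
  "r \<in> (I <+>\<^bsub>R\<^esub> PIdl x) \<longleftrightarrow> (\<exists>a\<in>I. \<exists>s\<in>carrier R. r = a \<oplus> s \<otimes> x)"
  unfolding set_add_def' cgenideal_def by blast

lemma (in cring) set_add_cgenideal_superset:
  assumes "ideal I R" and "x \<in> carrier R"
  shows "insert x I \<subseteq> I <+>\<^bsub>R\<^esub> PIdl x"
proof -
  have "I \<union> PIdl x \<subseteq> Idl (I \<union> PIdl x)"
    using assms cgenideal_ideal by (intro genideal_self) (auto dest: ideal.Icarr)
  moreover have "Idl (I \<union> PIdl x) = I <+>\<^bsub>R\<^esub> PIdl x"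
    using assms by (intro union_genideal cgenideal_ideal)
  ultimately show ?thesis
    using cgenideal_self[OF assms(2)] by auto
qed

lemma (in noetherian_ring) ideal_set_has_maximal:
  assumes "S \<noteq> {}" and "\<And>I. I \<in> S \<Longrightarrow> ideal I R"
  obtains M where "M \<in> S" and "\<And>I. I \<in> S \<Longrightarrow> M \<subseteq> I \<Longrightarrow> I = M"
proof -
  have "\<exists>M\<in>S. \<forall>I\<in>S. M \<subseteq> I \<longrightarrow> I = M"
  proof (rule subset_Zorn_nonempty[OF assms(1)])
    fix C assume C: "C \<noteq> {}" "subset.chain S C"
    then have "subset.chain {I. ideal I R} C"
      using assms(2) by (auto simp: pred_on.chain_def)
    then have "\<Union>C \<in> C"
      by (rule ideal_chain_is_trivial[OF C(1)])
    with C show "\<Union>C \<in> S"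
      by (auto simp: pred_on.chain_def)
  qed
  then show ?thesis
    using that by blast
qed

text \<open>The usual argument that an ideal maximal with respect to avoiding a multiplicative
  set is prime, with the closure axiom of the Gabriel topology replacing multiplicativity:
  if \<open>x y \<in> M\<close> with \<open>x, y \<notin> M\<close>, then \<open>M + Rx\<close> and \<open>(M : x)\<close> lie in \<open>F\<close>, and
  \<open>(M : x) \<subseteq> (M : r)\<close> for every \<open>r \<in> M + Rx\<close>, forcing \<open>M \<in> F\<close>.\<close>
lemma (in cring) maximal_ideal_outside_gabriel_is_prime:
  assumes gab: "gabriel_topology R F" and M: "ideal M R" "M \<notin> F"
    and above: "\<And>J. ideal J R \<Longrightarrow> M \<subset> J \<Longrightarrow> J \<in> F"
  shows "primeideal M R"
proof (rule primeidealI[OF M(1) is_cring])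
  interpret M: ideal M R by fact
  show "carrier R \<noteq> M"
    using gabriel_topology_carrier[OF gab] M(2) by blast
  fix x y assume x: "x \<in> carrier R" and y: "y \<in> carrier R" and xy: "x \<otimes> y \<in> M"
  show "x \<in> M \<or> y \<in> M"
  proof (rule ccontr)
    assume "\<not> (x \<in> M \<or> y \<in> M)"
    then have "M \<subset> M <+>\<^bsub>R\<^esub> PIdl x" and "M \<subset> colon_ideal R M x"
      using set_add_cgenideal_superset[OF M(1) x] x y xy M.I_r_closed m_comm
      by (auto simp: colon_ideal_def)
    then have sum_in: "M <+>\<^bsub>R\<^esub> PIdl x \<in> F" and colon_in: "colon_ideal R M x \<in> F"
      using above add_ideals[OF M(1) cgenideal_ideal[OF x]] ideal_colon_ideal[OF M(1) x]
      by blast+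
    have "colon_ideal R M r \<in> F" if "r \<in> M <+>\<^bsub>R\<^esub> PIdl x" for r
    proof -
      from that obtain a s where a: "a \<in> M" and s: "s \<in> carrier R" and r: "r = a \<oplus> s \<otimes> x"
        unfolding mem_set_add_cgenideal_iff by blast
      have "t \<otimes> r \<in> M" if "t \<in> carrier R" "t \<otimes> x \<in> M" for t
      proof -
        have "t \<otimes> r = t \<otimes> a \<oplus> s \<otimes> (t \<otimes> x)"
          using that a s x r by (simp add: r_distr m_lcomm)
        then show ?thesis
          using that a s by (simp add: M.I_l_closed)
      qed
      then have "colon_ideal R M x \<subseteq> colon_ideal R M r"
        by (auto simp: colon_ideal_def)
      moreover have "r \<in> carrier R"
        using r a s x by (simp add: M.Icarr)
      ultimately show ?thesis
        by (intro gabriel_topology_upward_closed[OF gab colon_in] ideal_colon_ideal[OF M(1)])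
    qed
    then have "M \<in> F"
      by (rule gabriel_topology_colon_closed[OF gab sum_in M(1)])
    with M(2) show False ..
  qed
qed

lemma (in cring) ideal_outside_gabriel_le_prime:
  assumes "noetherian_ring R" and gab: "gabriel_topology R F"
    and b: "ideal b R" "b \<notin> F"
  obtains q where "primeideal q R" and "q \<notin> F" and "b \<subseteq> q"
proof -
  interpret noetherian_ring R by fact
  define S where "S = {I. ideal I R \<and> b \<subseteq> I \<and> I \<notin> F}"
  obtain M where M: "M \<in> S" and M_max: "\<And>I. I \<in> S \<Longrightarrow> M \<subseteq> I \<Longrightarrow> I = M"
    by (rule ideal_set_has_maximal[of S]) (use b in \<open>auto simp: S_def\<close>)
  have "primeideal M R"
    using M M_max unfolding S_def
    by (intro maximal_ideal_outside_gabriel_is_prime[OF gab]) blast+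
  with M show ?thesis
    using that unfolding S_def by blast
qed

lemma F_star_primeideal: "p \<in> F_star R F \<Longrightarrow> primeideal p R"
  unfolding F_star_def by blast

lemma gabriel_ideal_not_subset_F_star:
  assumes "gabriel_topology R F" and "p \<in> F_star R F" and "a \<in> F"
  shows "\<not> a \<subseteq> p"
proof
  assume "a \<subseteq> p"
  moreover have "ideal p R"
    using F_star_primeideal[OF assms(2)] by (rule primeideal.axioms(1))
  ultimately have "p \<in> F"
    using gabriel_topology_upward_closed[OF assms(1,3)] by blast
  with assms(2) show False
    unfolding F_star_def by blast
qed

text \<open>Any prime outside \<open>F\<close> containing \<open>p + Rd\<close> contains \<open>p\<close>, hence equals \<open>p\<close> by
  maximality of \<open>p\<close>, which is impossible as it contains \<open>d\<close>.\<close>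
lemma (in cring) F_star_set_add_cgenideal_in_gabriel:
  assumes "noetherian_ring R" and gab: "gabriel_topology R F" and pF: "p \<in> F_star R F"
    and d: "d \<in> carrier R - p"
  shows "p <+>\<^bsub>R\<^esub> PIdl d \<in> F"
proof (rule ccontr)
  have p: "ideal p R"
    using F_star_primeideal[OF pF] by (rule primeideal.axioms(1))
  assume "p <+>\<^bsub>R\<^esub> PIdl d \<notin> F"
  then obtain q where q: "primeideal q R" "q \<notin> F" "p <+>\<^bsub>R\<^esub> PIdl d \<subseteq> q"
    using ideal_outside_gabriel_le_prime[OF assms(1) gab add_ideals[OF p cgenideal_ideal]] d by blast
  moreover have "insert d p \<subseteq> p <+>\<^bsub>R\<^esub> PIdl d"
    using set_add_cgenideal_superset[OF p] d by blast
  ultimately have "p \<subseteq> q" and "d \<in> q"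
    by blast+
  with q(1,2) pF have "q = p"
    unfolding F_star_def by blast
  with d \<open>d \<in> q\<close> show False by blast
qed

section \<open>Modules annihilated by an ideal\<close>

lemma ideal_times_mem: "r \<in> a \<Longrightarrow> x \<in> W \<Longrightarrow> r \<odot>\<^bsub>M\<^esub> x \<in> ideal_times M a W"
  unfolding ideal_times_def by blast

lemma ideal_times_minimal:
  assumes "\<zero>\<^bsub>M\<^esub> \<in> Y" and "\<And>r x. r \<in> a \<Longrightarrow> x \<in> W \<Longrightarrow> r \<odot>\<^bsub>M\<^esub> x \<in> Y"
    and "\<And>y z. y \<in> Y \<Longrightarrow> z \<in> Y \<Longrightarrow> y \<oplus>\<^bsub>M\<^esub> z \<in> Y"
  shows "ideal_times M a W \<subseteq> Y"
  unfolding ideal_times_def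
proof (rule Inter_lower)
  show "Y \<in> {Y. \<zero>\<^bsub>M\<^esub> \<in> Y \<and> (\<forall>r\<in>a. \<forall>x\<in>W. r \<odot>\<^bsub>M\<^esub> x \<in> Y) \<and> (\<forall>y\<in>Y. \<forall>z\<in>Y. y \<oplus>\<^bsub>M\<^esub> z \<in> Y)}"
    using assms by blast
qed

lemma ideal_times_eq_zeroD:
  assumes "ideal_times M a W = {\<zero>\<^bsub>M\<^esub>}" and "r \<in> a" and "x \<in> W"
  shows "r \<odot>\<^bsub>M\<^esub> x = \<zero>\<^bsub>M\<^esub>"
  using ideal_times_mem[OF assms(2,3), of M] unfolding assms(1) by simp

lemma ideal_times_submodule_subset:
  fixes M :: "('a, 'b) module"
  assumes "module R M" and "submodule V R M" and "a \<subseteq> carrier R"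
  shows "ideal_times M a V \<subseteq> V"
proof (rule ideal_times_minimal)
  interpret module R M by fact
  show "\<zero>\<^bsub>M\<^esub> \<in> V"
    using subgroup.one_closed[OF submodule.axioms(1)[OF assms(2)]] by simp
  show "r \<odot>\<^bsub>M\<^esub> x \<in> V" if "r \<in> a" and "x \<in> V" for r x
    using that assms(3) submoduleE(4)[OF assms(2)] by blast
  show "y \<oplus>\<^bsub>M\<^esub> z \<in> V" if "y \<in> V" and "z \<in> V" for y z
    using that by (rule submoduleE(5)[OF assms(2)])
qed

lemma (in module) zero_submodule: "submodule {\<zero>\<^bsub>M\<^esub>} R M"
  by (rule submoduleI) auto

lemma F_torsion_free_iff_quot_zero:
  assumes "module R M" and "\<And>a. a \<in> F \<Longrightarrow> a \<subseteq> carrier R"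
  shows "F_torsion_free F M \<longleftrightarrow> quot_F_torsion_free F M {\<zero>\<^bsub>M\<^esub>}"
proof -
  interpret module R M by fact
  have "\<zero>\<^bsub>M\<^esub> \<in> ann_part M a (carrier M)" if "a \<in> F" for a
    using assms(2)[OF that] by (auto simp: ann_part_def)
  then show ?thesis
    unfolding F_torsion_free_def quot_F_torsion_free_def ann_part_def by blast
qed

lemma torsion_free_iff_quot_zero: "torsion_free D M \<longleftrightarrow> quot_torsion_free D M {\<zero>\<^bsub>M\<^esub>}"
  unfolding torsion_free_def quot_torsion_free_def by simp

lemma quot_module_simps [simp]:
  "carrier (quot_module N) = carrier N" "\<zero>\<^bsub>quot_module N\<^esub> = \<zero>\<^bsub>N\<^esub>"
  "add (quot_module N) = add N"
  unfolding quot_module_def by simp_all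

lemma subgroup_add_monoid_quot_module_iff:
  "subgroup U (add_monoid (quot_module N)) \<longleftrightarrow> subgroup U (add_monoid N)"
  unfolding subgroup_def m_inv_def by simp

lemma (in ideal) Ball_carrier_FactRing_iff:
  "(\<forall>W\<in>carrier (R Quot I). P W) \<longleftrightarrow> (\<forall>r\<in>carrier R. P (I +> r))"
  by (simp add: FactRing_def A_RCOSETS_def')

lemma (in ideal) Ball_carrier_FactRing_nonzero_iff:
  "(\<forall>W\<in>carrier (R Quot I) - {\<zero>\<^bsub>R Quot I\<^esub>}. P W) \<longleftrightarrow> (\<forall>r\<in>carrier R - I. P (I +> r))"
proof -
  have "I +> r = I \<longleftrightarrow> r \<in> I" if "r \<in> carrier R" for r
    using that a_rcos_self a_rcos_const by metis
  then show ?thesis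
    by (auto simp: FactRing_def A_RCOSETS_def')
qed

locale killed_module = module R N + ideal p R
  for R :: "('a, 'c) ring_scheme" (structure) and N :: "('a, 'b) module" and p +
  assumes killed: "\<lbrakk>q \<in> p; x \<in> carrier N\<rbrakk> \<Longrightarrow> q \<odot>\<^bsub>N\<^esub> x = \<zero>\<^bsub>N\<^esub>"
begin

lemma smult_coset:
  assumes "r' \<in> p +> r" and "r \<in> carrier R" and "x \<in> carrier N"
  shows "r' \<odot>\<^bsub>N\<^esub> x = r \<odot>\<^bsub>N\<^esub> x"
proof -
  obtain q where q: "q \<in> p" and r': "r' = q \<oplus> r"
    using assms(1) unfolding a_r_coset_def' by blast
  then have "r' \<odot>\<^bsub>N\<^esub> x = q \<odot>\<^bsub>N\<^esub> x \<oplus>\<^bsub>N\<^esub> r \<odot>\<^bsub>N\<^esub> x"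
    using assms(2,3) by (simp add: smult_l_distr Icarr)
  with q assms(2,3) show ?thesis
    by (simp add: killed)
qed

lemma quot_module_smult:
  assumes "r \<in> carrier R" and "x \<in> carrier N"
  shows "(p +> r) \<odot>\<^bsub>quot_module N\<^esub> x = r \<odot>\<^bsub>N\<^esub> x"
  unfolding quot_module_def module.select_convs(1)
proof (rule some_equality)
  show "\<exists>r'\<in>p +> r. r \<odot>\<^bsub>N\<^esub> x = r' \<odot>\<^bsub>N\<^esub> x"
    using a_rcos_self[OF assms(1)] by blast
qed (use smult_coset assms in blast)

lemma submodule_quot_module_iff:
  "submodule U (R Quot p) (quot_module N) \<longleftrightarrow> submodule U R N"
proof -
  have "(\<forall>W\<in>carrier (R Quot p). \<forall>x\<in>U. W \<odot>\<^bsub>quot_module N\<^esub> x \<in> U) \<longleftrightarrow>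
        (\<forall>r\<in>carrier R. \<forall>x\<in>U. r \<odot>\<^bsub>N\<^esub> x \<in> U)" if "U \<subseteq> carrier N"
    using that by (auto simp: Ball_carrier_FactRing_iff quot_module_smult subset_iff)
  then show ?thesis
    unfolding submodule_def submodule_axioms_def subgroup_add_monoid_quot_module_iff
    by (auto dest: subgroup.subset)
qed

lemma quot_torsion_free_quot_module_iff:
  "quot_torsion_free (R Quot p) (quot_module N) U \<longleftrightarrow>
     (\<forall>d\<in>carrier R - p. \<forall>x\<in>carrier N. d \<odot>\<^bsub>N\<^esub> x \<in> U \<longrightarrow> x \<in> U)"
  unfolding quot_torsion_free_def quot_module_simps Ball_carrier_FactRing_nonzero_iff
  by (simp add: quot_module_smult)

lemma divisible_quot_module_iff:
  assumes "V \<subseteq> carrier N"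
  shows "divisible (R Quot p) (quot_module N) V \<longleftrightarrow> (\<forall>d\<in>carrier R - p. (\<lambda>x. d \<odot>\<^bsub>N\<^esub> x) ` V = V)"
proof -
  have "(\<lambda>x. (p +> d) \<odot>\<^bsub>quot_module N\<^esub> x) ` V = (\<lambda>x. d \<odot>\<^bsub>N\<^esub> x) ` V" if "d \<in> carrier R" for d
    using that assms by (auto simp: quot_module_smult subset_iff intro!: image_cong)
  then show ?thesis
    unfolding divisible_def Ball_carrier_FactRing_nonzero_iff by simp
qed

lemma smult_set_add_cgenideal:
  assumes "d \<in> carrier R" and "r \<in> p <+>\<^bsub>R\<^esub> PIdl d" and "x \<in> carrier N"
  obtains s where "s \<in> carrier R" and "r \<odot>\<^bsub>N\<^esub> x = (s \<otimes> d) \<odot>\<^bsub>N\<^esub> x"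
proof -
  obtain q s where "q \<in> p" "s \<in> carrier R" "r = q \<oplus> s \<otimes> d"
    using assms(2) unfolding mem_set_add_cgenideal_iff by blast
  then show ?thesis
    using that assms(1,3) by (auto simp: smult_l_distr Icarr killed)
qed

end

section \<open>Modules annihilated by a prime of \<open>F*\<close>\<close>

locale F_star_module = killed_module R N p
  for R :: "('a, 'c) ring_scheme" (structure) and N :: "('a, 'b) module" and p +
  fixes F :: "'a set set"
  assumes noetherian: "noetherian_ring R"
    and gabriel: "gabriel_topology R F"
    and F_star: "p \<in> F_star R F"
begin

lemma set_add_cgenideal_in_F:
  "d \<in> carrier R - p \<Longrightarrow> p <+>\<^bsub>R\<^esub> PIdl d \<in> F"
  by (rule F_star_set_add_cgenideal_in_gabriel[OF noetherian gabriel F_star])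

lemma F_element_outside_p:
  assumes "a \<in> F"
  obtains d where "d \<in> a" and "d \<in> carrier R - p"
proof -
  obtain d where "d \<in> a" and "d \<notin> p"
    using gabriel_ideal_not_subset_F_star[OF gabriel F_star assms] by blast
  moreover from this(1) have "d \<in> carrier R"
    using gabriel_topology_subset_carrier[OF gabriel assms] ..
  ultimately show thesis
    using that by blast
qed

lemma quot_F_torsion_free_iff:
  assumes U: "submodule U R N"
  shows "quot_F_torsion_free F N U \<longleftrightarrow> (\<forall>d\<in>carrier R - p. \<forall>x\<in>carrier N. d \<odot>\<^bsub>N\<^esub> x \<in> U \<longrightarrow> x \<in> U)"
proof
  assume tf: "quot_F_torsion_free F N U"
  show "\<forall>d\<in>carrier R - p. \<forall>x\<in>carrier N. d \<odot>\<^bsub>N\<^esub> x \<in> U \<longrightarrow> x \<in> U"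
  proof (intro ballI impI)
    fix d x assume d: "d \<in> carrier R - p" and x: "x \<in> carrier N" and dx: "d \<odot>\<^bsub>N\<^esub> x \<in> U"
    have "r \<odot>\<^bsub>N\<^esub> x \<in> U" if r: "r \<in> p <+>\<^bsub>R\<^esub> PIdl d" for r
    proof -
      obtain s where s: "s \<in> carrier R" and "r \<odot>\<^bsub>N\<^esub> x = (s \<otimes> d) \<odot>\<^bsub>N\<^esub> x"
        by (rule smult_set_add_cgenideal[OF _ r x]) (use d in blast)+
      then have "r \<odot>\<^bsub>N\<^esub> x = s \<odot>\<^bsub>N\<^esub> (d \<odot>\<^bsub>N\<^esub> x)"
        using d x by (simp add: smult_assoc1)
      then show ?thesis
        using submoduleE(4)[OF U s dx] by simp
    qed
    moreover have "\<forall>x\<in>carrier N. (\<forall>r\<in>p <+>\<^bsub>R\<^esub> PIdl d. r \<odot>\<^bsub>N\<^esub> x \<in> U) \<longrightarrow> x \<in> U"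
      using tf set_add_cgenideal_in_F[OF d] unfolding quot_F_torsion_free_def by (rule bspec)
    ultimately show "x \<in> U"
      using x by blast
  qed
next
  assume H: "\<forall>d\<in>carrier R - p. \<forall>x\<in>carrier N. d \<odot>\<^bsub>N\<^esub> x \<in> U \<longrightarrow> x \<in> U"
  show "quot_F_torsion_free F N U"
    unfolding quot_F_torsion_free_def
  proof (intro ballI impI)
    fix a x assume "a \<in> F" and x: "x \<in> carrier N" and ax: "\<forall>r\<in>a. r \<odot>\<^bsub>N\<^esub> x \<in> U"
    then obtain d where "d \<in> a" and "d \<in> carrier R - p"
      by (elim F_element_outside_p)
    with H x ax show "x \<in> U"
      by blast
  qed
qed

lemma ideal_times_set_add_cgenideal:
  assumes V: "submodule V R N" and d: "d \<in> carrier R"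
  shows "ideal_times N (p <+>\<^bsub>R\<^esub> PIdl d) V = (\<lambda>x. d \<odot>\<^bsub>N\<^esub> x) ` V"
proof
  have Vc: "V \<subseteq> carrier N"
    by (rule submoduleE(1)[OF V])
  show "ideal_times N (p <+>\<^bsub>R\<^esub> PIdl d) V \<subseteq> (\<lambda>x. d \<odot>\<^bsub>N\<^esub> x) ` V"
  proof (rule ideal_times_minimal)
    show "\<zero>\<^bsub>N\<^esub> \<in> (\<lambda>x. d \<odot>\<^bsub>N\<^esub> x) ` V"
      using d subgroup.one_closed[OF submodule.axioms(1)[OF V]] by force
  next
    fix r x assume r: "r \<in> p <+>\<^bsub>R\<^esub> PIdl d" and x: "x \<in> V"
    obtain s where s: "s \<in> carrier R" and "r \<odot>\<^bsub>N\<^esub> x = (s \<otimes> d) \<odot>\<^bsub>N\<^esub> x"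
      using smult_set_add_cgenideal d r x Vc by blast
    then have "r \<odot>\<^bsub>N\<^esub> x = d \<odot>\<^bsub>N\<^esub> (s \<odot>\<^bsub>N\<^esub> x)"
      using d x Vc by (simp add: m_comm smult_assoc1 subset_iff)
    then show "r \<odot>\<^bsub>N\<^esub> x \<in> (\<lambda>x. d \<odot>\<^bsub>N\<^esub> x) ` V"
      using submoduleE(4)[OF V s x] by blast
  next
    fix y z assume "y \<in> (\<lambda>x. d \<odot>\<^bsub>N\<^esub> x) ` V" and "z \<in> (\<lambda>x. d \<odot>\<^bsub>N\<^esub> x) ` V"
    then obtain v w where "v \<in> V" "w \<in> V" "y = d \<odot>\<^bsub>N\<^esub> v" "z = d \<odot>\<^bsub>N\<^esub> w"
      by blast
    moreover from this have "y \<oplus>\<^bsub>N\<^esub> z = d \<odot>\<^bsub>N\<^esub> (v \<oplus>\<^bsub>N\<^esub> w)"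
      using d Vc by (simp add: smult_r_distr subset_iff)
    ultimately show "y \<oplus>\<^bsub>N\<^esub> z \<in> (\<lambda>x. d \<odot>\<^bsub>N\<^esub> x) ` V"
      using submoduleE(5)[OF V] by blast
  qed
  have "d \<in> p <+>\<^bsub>R\<^esub> PIdl d"
    using set_add_cgenideal_superset[OF is_ideal d] by blast
  then show "(\<lambda>x. d \<odot>\<^bsub>N\<^esub> x) ` V \<subseteq> ideal_times N (p <+>\<^bsub>R\<^esub> PIdl d) V"
    by (auto intro: ideal_times_mem)
qed

lemma F_divisible_iff:
  assumes V: "submodule V R N"
  shows "F_divisible F N V \<longleftrightarrow> (\<forall>d\<in>carrier R - p. (\<lambda>x. d \<odot>\<^bsub>N\<^esub> x) ` V = V)"
proof
  assume div: "F_divisible F N V"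
  show "\<forall>d\<in>carrier R - p. (\<lambda>x. d \<odot>\<^bsub>N\<^esub> x) ` V = V"
  proof
    fix d assume d: "d \<in> carrier R - p"
    then have "(\<lambda>x. d \<odot>\<^bsub>N\<^esub> x) ` V = ideal_times N (p <+>\<^bsub>R\<^esub> PIdl d) V"
      using ideal_times_set_add_cgenideal[OF V] by simp
    also have "\<dots> = V"
      using div set_add_cgenideal_in_F[OF d] unfolding F_divisible_def by blast
    finally show "(\<lambda>x. d \<odot>\<^bsub>N\<^esub> x) ` V = V" .
  qed
next
  assume H: "\<forall>d\<in>carrier R - p. (\<lambda>x. d \<odot>\<^bsub>N\<^esub> x) ` V = V"
  show "F_divisible F N V"
    unfolding F_divisible_def
  proof
    fix a assume a: "a \<in> F"
    then obtain d where "d \<in> a" and "d \<in> carrier R - p"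
      by (elim F_element_outside_p)
    then have "V = (\<lambda>x. d \<odot>\<^bsub>N\<^esub> x) ` V"
      using H by blast
    also have "\<dots> \<subseteq> ideal_times N a V"
      using \<open>d \<in> a\<close> by (auto intro: ideal_times_mem)
    finally have "V \<subseteq> ideal_times N a V" .
    moreover have "ideal_times N a V \<subseteq> V"
      by (rule ideal_times_submodule_subset[OF module_axioms V gabriel_topology_subset_carrier[OF gabriel a]])
    ultimately show "ideal_times N a V = V" by blast
  qed
qed

lemma simple_F_torsion_free_iff:
  "simple_F_torsion_free R F N \<longleftrightarrow> simple_torsion_free (R Quot p) (quot_module N)"
proof -
  have quot: "quot_F_torsion_free F N U \<longleftrightarrow> quot_torsion_free (R Quot p) (quot_module N) U"
    if "submodule U R N" for U
    using that by (simp add: quot_F_torsion_free_iff quot_torsion_free_quot_module_iff)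
  have "F_torsion_free F N \<longleftrightarrow> quot_F_torsion_free F N {\<zero>\<^bsub>N\<^esub>}"
    by (rule F_torsion_free_iff_quot_zero[OF module_axioms gabriel_topology_subset_carrier[OF gabriel]])
  also have "\<dots> \<longleftrightarrow> quot_torsion_free (R Quot p) (quot_module N) {\<zero>\<^bsub>N\<^esub>}"
    by (rule quot[OF zero_submodule])
  also have "\<dots> \<longleftrightarrow> torsion_free (R Quot p) (quot_module N)"
    by (simp add: torsion_free_iff_quot_zero)
  finally show ?thesis
    using quot
    unfolding simple_F_torsion_free_def simple_torsion_free_def quot_module_simps
      submodule_quot_module_iff
    by blast
qed

lemma simple_F_divisible_iff:
  "simple_F_divisible R F N \<longleftrightarrow> simple_divisible (R Quot p) (quot_module N)"
proof -
  have div: "F_divisible F N V \<longleftrightarrow> divisible (R Quot p) (quot_module N) V"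
    if "submodule V R N" for V
    using that by (simp add: F_divisible_iff divisible_quot_module_iff submoduleE(1))
  then show ?thesis
    unfolding simple_F_divisible_def simple_divisible_def quot_module_simps
      submodule_quot_module_iff
    using carrier_is_submodule by blast
qed

end

theorem corollary1p3:
  fixes R :: "'a ring" and F :: "'a set set" and p :: "'a set"
    and N :: "('a, 'b) module"
  assumes "noetherian_ring R" and "local_ring R"
    and "gabriel_topology R F"
    and "p \<in> F_star R F"
    and "module R N"
    and "ideal_times N p (carrier N) = {\<zero>\<^bsub>N\<^esub>}"
  shows "(simple_F_torsion_free R F N \<longleftrightarrow> simple_torsion_free (R Quot p) (quot_module N))
       \<and> (simple_F_divisible R F N \<longleftrightarrow> simple_divisible (R Quot p) (quot_module N))"
proof -
  have "ideal p R"
    using F_star_primeideal[OF assms(4)] by (rule primeideal.axioms(1))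
  with assms(5) have "killed_module R N p"
    by (rule killed_module.intro) (use ideal_times_eq_zeroD[OF assms(6)] in unfold_locales)
  with assms(1,3,4) interpret F_star_module R N p F
    by (intro F_star_module.intro F_star_module_axioms.intro)
  show ?thesis
    using simple_F_torsion_free_iff simple_F_divisible_iff ..
qed

end
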